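(* Let $0<\alpha<\infty$ and define $\chi_\alpha(s)=\mu(Fix(s))^\alpha$ for $s\in S(2^\infty)$. If $\chi_\alpha$ is a character on $S(2^\infty)$, then $\alpha\in\mathbb{N}$.
   Context: Let $X=\{0,1\}^{\mathbb{N}}$ with product measure $\mu=\nu^{\otimes\infty}$, $\nu(\{0\})=\nu(\{1\})=1/2$; $X_n=\{0,1\}^n$; $S(2^n)$ the group of all bijections of $X_n$, acting on $X$ by $s((x,a))=(s(x),a)$ for $x\in X_n$, $a\in X$; $S(2^\infty)=\bigcup_n S(2^n)$; $Fix(s)=\{x\in X:s(x)=x\}$. A character on a group $G$ is a function $\chi:G\to\mathbb{C}$ with $\chi(g_1g_2)=\chi(g_2g_1)$ for all $g_1,g_2$, $(\chi(g_ig_j^{-1}))_{i,j=1}^n$ positive semidefinite for all $n$ and $g_1,\dots,g_n$, and $\chi(e)=1$. *)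

theory Defs
  imports "HOL-Probability.Probability"
begin

text \<open>Points of X = {0,1}^N are functions nat => bool (True = 1).\<close>
type_synonym cantor = "nat \<Rightarrow> bool"

definition mu :: "cantor measure" where
  "mu = PiM UNIV (\<lambda>_::nat. measure_pmf (pmf_of_set (UNIV :: bool set)))"

text \<open>X_n = {0,1}^n, represented as sequences vanishing from index n on.\<close>
definition Xn :: "nat \<Rightarrow> cantor set" where
  "Xn n = {x. \<forall>i\<ge>n. \<not> x i}"

definition trunc :: "nat \<Rightarrow> cantor \<Rightarrow> cantor" where
  "trunc n x = (\<lambda>i. if i < n then x i else False)"

text \<open>Action of a bijection s of X_n on X: s((x,a)) = (s(x),a).\<close>
definition act :: "nat \<Rightarrow> (cantor \<Rightarrow> cantor) \<Rightarrow> cantor \<Rightarrow> cantor" where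
  "act n s y = (\<lambda>i. if i < n then s (trunc n y) i else y i)"

definition S2n :: "nat \<Rightarrow> (cantor \<Rightarrow> cantor) set" where
  "S2n n = {act n s | s. bij_betw s (Xn n) (Xn n)}"

definition S2inf :: "(cantor \<Rightarrow> cantor) set" where
  "S2inf = (\<Union>n. S2n n)"

definition Fix :: "('a \<Rightarrow> 'a) \<Rightarrow> 'a set" where
  "Fix s = {x. s x = x}"

definition is_character :: "('a \<Rightarrow> 'a) set \<Rightarrow> (('a \<Rightarrow> 'a) \<Rightarrow> complex) \<Rightarrow> bool" where
  "is_character G chi \<longleftrightarrow>
     (\<forall>g1\<in>G. \<forall>g2\<in>G. chi (g1 \<circ> g2) = chi (g2 \<circ> g1)) \<and>
     (\<forall>n::nat. \<forall>g::nat \<Rightarrow> ('a \<Rightarrow> 'a). (\<forall>i<n. g i \<in> G) \<longrightarrow>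
        (\<forall>c::nat \<Rightarrow> complex.
           let q = (\<Sum>i<n. \<Sum>j<n. cnj (c i) * c j * chi (g i \<circ> inv (g j)))
           in Im q = 0 \<and> Re q \<ge> 0)) \<and>
     chi id = 1"

end

theory Submission
  imports Defs
begin

text \<open>For \<open>T \<subseteq> {0..<m}\<close> let g_T swap the basis points e_2k and e_(2k+1) of X_2m for
  all k in T. These elements form a group (Z/2)^m with g_T g_T'^(-1) = g_((T - T') \<union> (T' - T)) and
  mu(Fix g_T) = 1 - c|T|, where c = 2^(1-2m). Testing positive semidefiniteness of
  chi_alpha against the vector ((-1)^|T|)_T shows that the alternating sum
  \<open>\<Sum>\<close>_U (-1)^|U| (1 - c|U|)^alpha, an m-th finite difference, is nonnegative. By the mean
  value theorem this difference has the sign of the binomial coefficient (alpha choose m)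
  when alpha is not an integer, and that coefficient is negative for m = floor alpha + 2.\<close>

section \<open>Alternating differences of powers\<close>

text \<open>\<open>(-1)\<^sup>m\<close> times the \<open>m\<close>-th forward difference of \<open>f\<close> with unit step.\<close>

definition alt_diff :: "(real \<Rightarrow> real) \<Rightarrow> nat \<Rightarrow> real \<Rightarrow> real" where
  "alt_diff f m x = (\<Sum>U\<in>Pow {..<m}. (-1) ^ card U * f (x + real (card U)))"

lemma alt_diff_Suc: "alt_diff f (Suc m) x = alt_diff f m x - alt_diff f m (x + 1)"
proof -
  have split: "Pow {..<Suc m} = Pow {..<m} \<union> insert m ` Pow {..<m}"
    by (simp add: lessThan_Suc Pow_insert)
  have inj: "inj_on (insert m) (Pow {..<m})"
    by (rule inj_onI) (metis Diff_insert_absorb PowD lessThan_iff less_irrefl subsetD)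
  have "(\<Sum>U\<in>insert m ` Pow {..<m}. (-1) ^ card U * f (x + real (card U)))
      = (\<Sum>U\<in>Pow {..<m}. (-1) ^ card (insert m U) * f (x + real (card (insert m U))))"
    by (simp add: sum.reindex[OF inj])
  also have "\<dots> = - alt_diff f m (x + 1)"
    unfolding alt_diff_def sum_negf[symmetric]
  proof (rule sum.cong[OF refl])
    fix U assume "U \<in> Pow {..<m}"
    then have "finite U" "m \<notin> U" by (auto intro: finite_subset)
    then show "(-1) ^ card (insert m U) * f (x + real (card (insert m U)))
        = - ((-1) ^ card U * f (x + 1 + real (card U)))"
      by (simp add: algebra_simps)
  qed
  finally show ?thesis
    unfolding alt_diff_def split by (subst sum.union_disjoint) auto
qed

lemma alt_diff_has_real_derivative:
  assumes "\<And>k. k \<le> m \<Longrightarrow> (f has_real_derivative f' (x + real k)) (at (x + real k))"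
  shows "(alt_diff f m has_real_derivative alt_diff f' m x) (at x)"
  unfolding alt_diff_def
proof (intro DERIV_sum DERIV_cmult)
  fix U assume "U \<in> Pow {..<m}"
  then have "card U \<le> m" by (metis PowD card_lessThan card_mono finite_lessThan)
  then show "((\<lambda>x. f (x + real (card U))) has_real_derivative f' (x + real (card U))) (at x)"
    using assms DERIV_shift by blast
qed

lemma alt_diff_cmult: "alt_diff (\<lambda>t. k * f t) m x = k * alt_diff f m x"
  unfolding alt_diff_def sum_distrib_left by (simp add: algebra_simps)

lemma powr_affine_has_real_derivative:
  assumes "1 - c * x > 0"
  shows "((\<lambda>t. (1 - c * t) powr a) has_real_derivative - c * a * (1 - c * x) powr (a - 1)) (at x)"
  using assms by (auto intro!: derivative_eq_intros simp: algebra_simps)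

lemma alt_diff_powr_Suc_mean_value:
  assumes "c > 0" "1 - c * (x + real (Suc m)) > 0"
  obtains z where "x < z" "z < x + 1"
    "alt_diff (\<lambda>t. (1 - c * t) powr a) (Suc m) x
      = c * a * alt_diff (\<lambda>t. (1 - c * t) powr (a - 1)) m z"
proof -
  define f where "f b t = (1 - c * t) powr b" for b t
  have "(alt_diff (f a) m has_real_derivative - c * a * alt_diff (f (a - 1)) m z) (at z)"
    if "z \<le> x + 1" for z
  proof -
    have below: "1 - c * (z + real k) > 0" if "k \<le> m" for k
    proof -
      have "c * (z + real k) \<le> c * (x + real (Suc m))"
        using \<open>z \<le> x + 1\<close> that assms(1) by (intro mult_left_mono) auto
      then show ?thesis
        using assms(2) by linarith
    qed
    have "(alt_diff (f a) m has_real_derivative alt_diff (\<lambda>t. - c * a * f (a - 1) t) m z) (at z)"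
      unfolding f_def
      by (rule alt_diff_has_real_derivative) (use below powr_affine_has_real_derivative in auto)
    then show ?thesis
      by (simp only: alt_diff_cmult)
  qed
  then obtain z where "x < z" "z < x + 1"
      "alt_diff (f a) m (x + 1) - alt_diff (f a) m x = - c * a * alt_diff (f (a - 1)) m z"
    using MVT2[of x "x + 1" "alt_diff (f a) m"] by fastforce
  then show ?thesis
    using that unfolding f_def by (simp add: alt_diff_Suc)
qed

lemma alt_diff_powr_gchoose_pos:
  assumes "c > 0" "a \<notin> \<int>" "1 - c * (x + real m) > 0"
  shows "alt_diff (\<lambda>t. (1 - c * t) powr a) m x * (a gchoose m) > 0"
  using assms(2,3)
proof (induction m arbitrary: a x)
  case 0
  then show ?case by (simp add: alt_diff_def)
next
  case (Suc m)
  define f where "f b t = (1 - c * t) powr b" for b t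
  have a_nonzero: "a \<noteq> 0"
    using Suc.prems(1) by auto
  have "a - 1 \<notin> \<int>"
    using Suc.prems(1) by (metis Ints_1 Ints_add diff_add_cancel)
  obtain z where z: "x < z" "z < x + 1"
    and step: "alt_diff (f a) (Suc m) x = c * a * alt_diff (f (a - 1)) m z"
    using alt_diff_powr_Suc_mean_value[OF assms(1) Suc.prems(2)] unfolding f_def by blast
  have "c * (z + real m) \<le> c * (x + real (Suc m))"
    using z assms(1) by (intro mult_left_mono) auto
  then have "1 - c * (z + real m) > 0"
    using Suc.prems(2) by linarith
  then have IH: "alt_diff (f (a - 1)) m z * ((a - 1) gchoose m) > 0"
    unfolding f_def using Suc.IH \<open>a - 1 \<notin> \<int>\<close> by blast
  have absorb: "a gchoose Suc m = a * ((a - 1) gchoose m) / real (Suc m)"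
    using gbinomial_absorption[of m a] by (simp add: field_simps del: of_nat_Suc)
  have "alt_diff (f a) (Suc m) x * (a gchoose Suc m)
      = c * (a * a) / real (Suc m) * (alt_diff (f (a - 1)) m z * ((a - 1) gchoose m))"
    unfolding step absorb by (simp add: field_simps)
  also have "\<dots> > 0"
  proof (rule mult_pos_pos[OF _ IH])
    have "a * a > 0"
      using a_nonzero by (metis not_real_square_gt_zero)
    then show "c * (a * a) / real (Suc m) > 0"
      using assms(1) by (intro divide_pos_pos[OF mult_pos_pos]) auto
  qed
  finally show ?case
    unfolding f_def .
qed

lemma gchoose_floor_add_two_neg:
  fixes a :: real
  assumes "a > 0" "a \<notin> \<int>"
  shows "a gchoose (nat \<lfloor>a\<rfloor> + 2) < 0"
proof -
  define k where "k = nat \<lfloor>a\<rfloor>"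
  have "real k = of_int \<lfloor>a\<rfloor>"
    using assms(1) unfolding k_def by simp
  moreover have "real k \<noteq> a"
    using assms(2) Ints_of_nat by blast
  ultimately have k: "real k < a" "a < real k + 1"
    using of_int_floor_le[of a] real_of_int_floor_add_one_gt[of a] by linarith+
  have "(\<Prod>i<Suc k. a - real i) > 0"
    using k by (intro prod_pos) auto
  moreover have "a - real (Suc k) < 0" using k by simp
  ultimately have "(\<Prod>i<k + 2. a - real i) < 0"
    by (simp add: mult_pos_neg)
  then show ?thesis
    unfolding k_def gbinomial_prod_rev atLeast0LessThan by (simp add: divide_neg_pos)
qed

section \<open>Products of disjoint transpositions of X_2m\<close>

definition basis_point :: "nat \<Rightarrow> cantor" where
  "basis_point j = (\<lambda>i. i = j)"

definition pair_swap :: "nat \<Rightarrow> nat" where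
  "pair_swap i = (if even i then Suc i else i - 1)"

definition in_pairs :: "nat set \<Rightarrow> cantor \<Rightarrow> bool" where
  "in_pairs T x \<longleftrightarrow> (\<exists>j. j div 2 \<in> T \<and> x = basis_point j)"

text \<open>Precomposing a basis point with \<open>pair_swap\<close> exchanges e_2k and e_(2k+1), so
  \<open>swap_pairs T\<close> is the product of these disjoint transpositions for k in T.\<close>

definition swap_pairs :: "nat set \<Rightarrow> cantor \<Rightarrow> cantor" where
  "swap_pairs T x = (if in_pairs T x then x \<circ> pair_swap else x)"

lemma pair_swap_pair_swap [simp]: "pair_swap (pair_swap i) = i"
  unfolding pair_swap_def by auto

lemma pair_swap_div_2 [simp]: "pair_swap i div 2 = i div 2"
  unfolding pair_swap_def by (auto elim!: oddE)

lemma pair_swap_neq: "pair_swap i \<noteq> i"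
  unfolding pair_swap_def by (cases i) auto

lemma pair_swap_less_double_iff: "pair_swap i < 2 * m \<longleftrightarrow> i div 2 < m"
  unfolding pair_swap_def by (auto elim!: evenE oddE)

lemma basis_point_inject [simp]: "basis_point i = basis_point j \<longleftrightarrow> i = j"
  unfolding basis_point_def by metis

lemma basis_point_comp_pair_swap: "basis_point j \<circ> pair_swap = basis_point (pair_swap j)"
  unfolding basis_point_def by (simp add: fun_eq_iff) (metis pair_swap_pair_swap)

lemma comp_pair_swap_pair_swap [simp]: "x \<circ> pair_swap \<circ> pair_swap = x"
  by (simp add: fun_eq_iff)

lemma basis_point_Xn: "j < N \<Longrightarrow> basis_point j \<in> Xn N"
  unfolding basis_point_def Xn_def by auto

lemma in_pairs_comp_pair_swap: "in_pairs T (x \<circ> pair_swap) \<longleftrightarrow> in_pairs T x"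
proof -
  have "x \<circ> pair_swap = basis_point j \<longleftrightarrow> x = basis_point (pair_swap j)" for j
    by (metis comp_pair_swap_pair_swap basis_point_comp_pair_swap)
  then show ?thesis
    unfolding in_pairs_def by (metis pair_swap_div_2 pair_swap_pair_swap)
qed

lemma in_pairs_sym_diff: "in_pairs (sym_diff T T') x \<longleftrightarrow> in_pairs T x \<noteq> in_pairs T' x"
  unfolding in_pairs_def by auto

lemma swap_pairs_swap_pairs: "swap_pairs T (swap_pairs T' x) = swap_pairs (sym_diff T T') x"
  unfolding swap_pairs_def in_pairs_sym_diff by (auto simp: in_pairs_comp_pair_swap o_assoc)

lemma swap_pairs_empty [simp]: "swap_pairs {} = (\<lambda>x. x)"
  unfolding swap_pairs_def in_pairs_def by simp

lemma swap_pairs_involution: "swap_pairs T (swap_pairs T x) = x"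
  by (simp add: swap_pairs_swap_pairs)

lemma swap_pairs_eq_iff: "swap_pairs T x = x \<longleftrightarrow> \<not> in_pairs T x"
  unfolding swap_pairs_def in_pairs_def
  by (auto simp: basis_point_comp_pair_swap pair_swap_neq)

lemma swap_pairs_image_Xn:
  assumes "T \<subseteq> {..<m}"
  shows "swap_pairs T ` Xn (2 * m) \<subseteq> Xn (2 * m)"
proof (intro image_subsetI)
  fix x assume x: "x \<in> Xn (2 * m)"
  show "swap_pairs T x \<in> Xn (2 * m)"
  proof (cases "in_pairs T x")
    case True
    then obtain j where j: "j div 2 \<in> T" "x = basis_point j"
      unfolding in_pairs_def by blast
    then have "pair_swap j < 2 * m"
      using assms by (auto simp: pair_swap_less_double_iff)
    then show ?thesis
      using True j by (simp add: swap_pairs_def basis_point_comp_pair_swap basis_point_Xn)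
  qed (use x in \<open>simp add: swap_pairs_def\<close>)
qed

lemma div_2_preimage: "{j::nat. j div 2 \<in> T} = (\<lambda>(k, b). 2 * k + b) ` (T \<times> {0, 1})"
proof (intro subset_antisym subsetI)
  fix j assume "j \<in> {j. j div 2 \<in> T}"
  moreover have "j = 2 * (j div 2) + j mod 2" "j mod 2 \<in> {0, 1}"
    by auto
  ultimately show "j \<in> (\<lambda>(k, b). 2 * k + b) ` (T \<times> {0, 1})"
    by (metis (no_types, lifting) SigmaI case_prod_conv image_eqI mem_Collect_eq)
qed auto

lemma card_in_pairs:
  assumes "T \<subseteq> {..<m}"
  shows "card {x \<in> Xn (2 * m). in_pairs T x} = 2 * card T"
proof -
  have "{x \<in> Xn (2 * m). in_pairs T x} = basis_point ` {j. j div 2 \<in> T}"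
    using assms unfolding in_pairs_def
    by (auto intro!: basis_point_Xn simp: Xn_def basis_point_def div_less_iff_less_mult mult.commute)
  also have "\<dots> = basis_point ` (\<lambda>(k, b). 2 * k + b) ` (T \<times> {0, 1})"
    by (simp only: div_2_preimage)
  finally have eq: "{x \<in> Xn (2 * m). in_pairs T x} = basis_point ` (\<lambda>(k, b). 2 * k + b) ` (T \<times> {0, 1})" .
  have "inj_on (\<lambda>(k, b). 2 * k + b) (T \<times> {0, 1::nat})"
    by (auto intro!: inj_onI) presburger+
  moreover have "inj basis_point"
    by (auto intro!: injI)
  ultimately show ?thesis
    unfolding eq using assms finite_subset
    by (simp add: card_image inj_on_subset card_cartesian_product)
qed

section \<open>Fixed points and the product measure\<close>

lemma trunc_Xn: "trunc N y \<in> Xn N"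
  unfolding trunc_def Xn_def by auto

lemma trunc_act:
  assumes "s ` Xn N \<subseteq> Xn N"
  shows "trunc N (act N s y) = s (trunc N y)"
proof -
  have "s (trunc N y) \<in> Xn N"
    using assms trunc_Xn by blast
  then show ?thesis
    unfolding trunc_def[of N "act N s y"] by (auto simp: fun_eq_iff act_def Xn_def)
qed

lemma act_comp:
  assumes "s' ` Xn N \<subseteq> Xn N"
  shows "act N s \<circ> act N s' = act N (s \<circ> s')"
  by (simp add: fun_eq_iff act_def[of N s] trunc_act[OF assms]) (simp add: act_def)

lemma act_id: "act N (\<lambda>x. x) = id"
  unfolding act_def trunc_def by (auto simp: fun_eq_iff)

lemma Fix_act:
  assumes "s ` Xn N \<subseteq> Xn N"
  shows "Fix (act N s) = {y. trunc N y \<in> Fix s}"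
proof -
  have "act N s y = y \<longleftrightarrow> s (trunc N y) = trunc N y" for y
  proof
    show "act N s y = y \<Longrightarrow> s (trunc N y) = trunc N y"
      using trunc_act[OF assms, of y] by simp
    show "s (trunc N y) = trunc N y \<Longrightarrow> act N s y = y"
      unfolding act_def by (auto simp: fun_eq_iff trunc_def)
  qed
  then show ?thesis unfolding Fix_def by simp
qed

lemma Xn_eq_image_Pow: "Xn N = (\<lambda>S i. i \<in> S) ` Pow {..<N}"
proof (intro subset_antisym subsetI)
  fix x assume "x \<in> Xn N"
  then have "{i. x i} \<in> Pow {..<N}" and "x = (\<lambda>i. i \<in> {i. x i})"
    unfolding Xn_def by (auto simp: not_le[symmetric])
  then show "x \<in> (\<lambda>S i. i \<in> S) ` Pow {..<N}"
    by blast
qed (auto simp: Xn_def)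

lemma card_Xn: "card (Xn N) = 2 ^ N"
proof -
  have "inj_on (\<lambda>S i. i \<in> S) (Pow {..<N})"
    by (auto intro!: inj_onI simp: fun_eq_iff)
  then show ?thesis
    unfolding Xn_eq_image_Pow by (simp add: card_image card_Pow)
qed

lemma finite_Xn: "finite (Xn N)"
  unfolding Xn_eq_image_Pow by simp

interpretation mu: prob_space mu
  unfolding mu_def by (rule prob_space_PiM) (simp add: prob_space_measure_pmf)

lemma trunc_preimage_eq_prod_emb:
  assumes "p \<in> Xn N"
  shows "{y. trunc N y = p} =
    prod_emb UNIV (\<lambda>_. measure_pmf (pmf_of_set UNIV)) {..<N} (PiE {..<N} (\<lambda>i. {p i}))"
  using assms unfolding prod_emb_def trunc_def Xn_def
  by (auto simp: space_PiM PiE_iff fun_eq_iff)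

lemma trunc_preimage_sets:
  assumes "p \<in> Xn N"
  shows "{y. trunc N y = p} \<in> sets mu"
  unfolding trunc_preimage_eq_prod_emb[OF assms] mu_def
  by (intro sets_PiM_I) auto

lemma measure_trunc_preimage_point:
  assumes "p \<in> Xn N"
  shows "measure mu {y. trunc N y = p} = 1 / 2 ^ N"
proof -
  have "emeasure mu {y. trunc N y = p} = (\<Prod>i<N. ennreal (1 / 2))"
    unfolding trunc_preimage_eq_prod_emb[OF assms] mu_def
    by (subst emeasure_PiM_emb) (auto simp: prob_space_measure_pmf emeasure_pmf_single)
  also have "\<dots> = ennreal ((1 / 2) ^ N)"
    by (subst ennreal_power[symmetric]) auto
  finally show ?thesis
    by (simp add: measure_def power_one_over)
qed

lemma measure_trunc_preimage:
  assumes "B \<subseteq> Xn N"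
  shows "measure mu {y. trunc N y \<in> B} = card B / 2 ^ N"
proof -
  have fin: "finite B"
    using assms finite_Xn finite_subset by blast
  have "{y. trunc N y \<in> B} = (\<Union>p\<in>B. {y. trunc N y = p})"
    by auto
  then have "measure mu {y. trunc N y \<in> B} = (\<Sum>p\<in>B. measure mu {y. trunc N y = p})"
    using assms by (simp, intro mu.finite_measure_finite_Union fin)
      (auto intro: trunc_preimage_sets simp: disjoint_family_on_def)
  also have "\<dots> = card B / 2 ^ N"
    using assms by (simp add: measure_trunc_preimage_point subset_iff)
  finally show ?thesis .
qed

lemma measure_Fix_act:
  assumes "s ` Xn N \<subseteq> Xn N"
  shows "measure mu (Fix (act N s)) = card (Fix s \<inter> Xn N) / 2 ^ N"
proof -
  have "Fix (act N s) = {y. trunc N y \<in> Fix s \<inter> Xn N}"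
    unfolding Fix_act[OF assms] using trunc_Xn by blast
  then show ?thesis
    by (simp only: measure_trunc_preimage[OF Int_lower2])
qed

section \<open>An elementary abelian subgroup of S(2^\<infinity>)\<close>

definition pair_transpositions :: "nat \<Rightarrow> nat set \<Rightarrow> cantor \<Rightarrow> cantor" where
  "pair_transpositions m T = act (2 * m) (swap_pairs T)"

lemma pair_transpositions_in_S2inf:
  assumes "T \<subseteq> {..<m}"
  shows "pair_transpositions m T \<in> S2inf"
proof -
  have "bij_betw (swap_pairs T) (Xn (2 * m)) (Xn (2 * m))"
    by (rule bij_betwI[where g = "swap_pairs T"])
      (use swap_pairs_image_Xn[OF assms] in \<open>auto simp: swap_pairs_involution\<close>)
  then show ?thesis
    unfolding pair_transpositions_def S2inf_def S2n_def by blast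
qed

lemma pair_transpositions_comp:
  assumes "T' \<subseteq> {..<m}"
  shows "pair_transpositions m T \<circ> pair_transpositions m T' = pair_transpositions m (sym_diff T T')"
  unfolding pair_transpositions_def act_comp[OF swap_pairs_image_Xn[OF assms]]
  by (simp add: comp_def swap_pairs_swap_pairs)

lemma inv_pair_transpositions:
  assumes "T \<subseteq> {..<m}"
  shows "inv (pair_transpositions m T) = pair_transpositions m T"
proof (rule inv_unique_comp)
  have "pair_transpositions m T \<circ> pair_transpositions m T = id"
    using pair_transpositions_comp[OF assms, of T] by (simp add: pair_transpositions_def act_id)
  then show "pair_transpositions m T \<circ> pair_transpositions m T = id"
    "pair_transpositions m T \<circ> pair_transpositions m T = id" by simp_all
qed

lemma measure_Fix_pair_transpositions:
  assumes "T \<subseteq> {..<m}"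
  shows "measure mu (Fix (pair_transpositions m T)) = 1 - 2 * card T / 2 ^ (2 * m)"
proof -
  let ?moved = "{x \<in> Xn (2 * m). in_pairs T x}"
  have "Fix (swap_pairs T) \<inter> Xn (2 * m) = Xn (2 * m) - ?moved"
    by (auto simp: Fix_def swap_pairs_eq_iff)
  then have "card (Fix (swap_pairs T) \<inter> Xn (2 * m)) = 2 ^ (2 * m) - 2 * card T"
    by (simp add: card_Diff_subset finite_Xn card_Xn card_in_pairs[OF assms])
  moreover have "2 * card T \<le> (2::nat) ^ (2 * m)"
    using card_mono[OF finite_Xn, of ?moved "2 * m"] by (simp add: card_Xn card_in_pairs[OF assms])
  ultimately show ?thesis
    unfolding pair_transpositions_def measure_Fix_act[OF swap_pairs_image_Xn[OF assms]]
    by (simp add: of_nat_diff diff_divide_distrib)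
qed

section \<open>Positive semidefiniteness against the Walsh vector\<close>

lemma is_character_Re_nonneg:
  assumes "is_character G chi" "finite A" "g ` A \<subseteq> G"
  shows "0 \<le> Re (\<Sum>a\<in>A. \<Sum>b\<in>A. cnj (c a) * c b * chi (g a \<circ> inv (g b)))"
proof -
  obtain h where h: "bij_betw h {..<card A} A"
    using ex_bij_betw_nat_finite[OF assms(2)] by (auto simp: atLeast0LessThan)
  have psd: "\<forall>(n::nat) g. (\<forall>i<n. g i \<in> G) \<longrightarrow> (\<forall>c.
      Im (\<Sum>i<n. \<Sum>j<n. cnj (c i) * c j * chi (g i \<circ> inv (g j))) = 0 \<and>
      0 \<le> Re (\<Sum>i<n. \<Sum>j<n. cnj (c i) * c j * chi (g i \<circ> inv (g j))))"
    using assms(1) unfolding is_character_def Let_def by blast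
  have "\<forall>i<card A. (g \<circ> h) i \<in> G"
    using assms(3) h by (auto simp: bij_betw_def)
  then have "0 \<le> Re (\<Sum>i<card A. \<Sum>j<card A. cnj (c (h i)) * c (h j) * chi (g (h i) \<circ> inv (g (h j))))"
    using psd[rule_format, of "card A" "g \<circ> h" "c \<circ> h"] by simp
  also have "(\<Sum>i<card A. \<Sum>j<card A. cnj (c (h i)) * c (h j) * chi (g (h i) \<circ> inv (g (h j))))
      = (\<Sum>a\<in>A. \<Sum>j<card A. cnj (c a) * c (h j) * chi (g a \<circ> inv (g (h j))))"
    by (rule sum.reindex_bij_betw[OF h])
  also have "\<dots> = (\<Sum>a\<in>A. \<Sum>b\<in>A. cnj (c a) * c b * chi (g a \<circ> inv (g b)))"
    by (intro sum.cong refl sum.reindex_bij_betw[OF h])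
  finally show ?thesis .
qed

lemma minus_one_power_card_sym_diff:
  assumes "finite T" "finite T'"
  shows "(-1::'a::comm_ring_1) ^ card T * (-1) ^ card T' = (-1) ^ card (sym_diff T T')"
proof -
  have "card T = card (T \<inter> T') + card (T - T')" "card T' = card (T \<inter> T') + card (T' - T)"
    using card_Int_Diff[of T T'] card_Int_Diff[of T' T] assms by (auto simp: Int_commute)
  moreover have "card (sym_diff T T') = card (T - T') + card (T' - T)"
    using assms by (intro card_Un_disjoint) auto
  ultimately show ?thesis
    by (simp add: power_add algebra_simps flip: power_mult_distrib)
qed

lemma sum_Pow_sym_diff:
  fixes F :: "'a set \<Rightarrow> 'b::comm_ring_1"
  assumes "finite I"
  shows "(\<Sum>T\<in>Pow I. \<Sum>T'\<in>Pow I. (-1) ^ card T * (-1) ^ card T' * F (sym_diff T T'))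
    = 2 ^ card I * (\<Sum>U\<in>Pow I. (-1) ^ card U * F U)"
proof -
  have "(\<Sum>T'\<in>Pow I. (-1) ^ card T * (-1) ^ card T' * F (sym_diff T T'))
      = (\<Sum>U\<in>Pow I. (-1) ^ card U * F U)" if "T \<in> Pow I" for T
  proof -
    have "bij_betw (sym_diff T) (Pow I) (Pow I)"
      by (rule bij_betwI[where g = "sym_diff T"]) (use that in auto)
    moreover have "(-1) ^ card T * (-1) ^ card T' = ((-1) ^ card (sym_diff T T') :: 'b)"
      if "T' \<in> Pow I" for T'
      using \<open>T \<in> Pow I\<close> that assms
      by (intro minus_one_power_card_sym_diff) (auto intro: finite_subset)
    ultimately show ?thesis
      using sum.reindex_bij_betw[of "sym_diff T" "Pow I" "Pow I" "\<lambda>U. (-1) ^ card U * F U"]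
      by simp
  qed
  then show ?thesis
    using assms by (simp add: card_Pow)
qed

lemma Walsh_form_pair_transpositions:
  "(\<Sum>T\<in>Pow {..<m}. \<Sum>T'\<in>Pow {..<m}.
      cnj (complex_of_real ((-1) ^ card T)) * complex_of_real ((-1) ^ card T') *
      complex_of_real (measure mu (Fix (pair_transpositions m T \<circ> inv (pair_transpositions m T'))) powr \<alpha>))
    = complex_of_real (2 ^ m * alt_diff (\<lambda>t. (1 - 2 / 2 ^ (2 * m) * t) powr \<alpha>) m 0)"
  (is "?form = _")
proof -
  define f where "f t = (1 - 2 / 2 ^ (2 * m) * t) powr \<alpha>" for t :: real
  have "measure mu (Fix (pair_transpositions m T \<circ> inv (pair_transpositions m T')))
      = 1 - 2 / 2 ^ (2 * m) * card (sym_diff T T')"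
    if "T \<in> Pow {..<m}" "T' \<in> Pow {..<m}" for T T'
  proof -
    have "sym_diff T T' \<subseteq> {..<m}"
      using that by auto
    then show ?thesis
      using that by (simp add: inv_pair_transpositions pair_transpositions_comp
          measure_Fix_pair_transpositions)
  qed
  then have "?form = (\<Sum>T\<in>Pow {..<m}. \<Sum>T'\<in>Pow {..<m}.
      (-1) ^ card T * (-1) ^ card T' * complex_of_real (f (card (sym_diff T T'))))"
    by (intro sum.cong refl) (simp add: f_def)
  also have "\<dots> = 2 ^ m * (\<Sum>U\<in>Pow {..<m}. (-1) ^ card U * complex_of_real (f (card U)))"
    using sum_Pow_sym_diff[of "{..<m}" "\<lambda>U. complex_of_real (f (card U))"] by simp
  also have "\<dots> = complex_of_real (2 ^ m * alt_diff f m 0)"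
    by (simp add: alt_diff_def sum_distrib_left)
  finally show ?thesis
    unfolding f_def[abs_def] .
qed

lemma character_alt_diff_nonneg:
  assumes "is_character S2inf (\<lambda>s. complex_of_real (measure mu (Fix s) powr \<alpha>))"
  shows "0 \<le> alt_diff (\<lambda>t. (1 - 2 / 2 ^ (2 * m) * t) powr \<alpha>) m 0"
proof -
  have "pair_transpositions m ` Pow {..<m} \<subseteq> S2inf"
    using pair_transpositions_in_S2inf by blast
  then have "0 \<le> 2 ^ m * alt_diff (\<lambda>t. (1 - 2 / 2 ^ (2 * m) * t) powr \<alpha>) m 0"
    using is_character_Re_nonneg[OF assms, of "Pow {..<m}" "pair_transpositions m"
        "\<lambda>T. complex_of_real ((-1) ^ card T)"]
    by (simp only: Walsh_form_pair_transpositions Re_complex_of_real finite_Pow_iff finite_lessThan)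
  moreover have "(0::real) < 2 ^ m"
    by simp
  ultimately show ?thesis
    by (simp add: zero_le_mult_iff)
qed

theorem mainTheorem9:
  fixes \<alpha> :: real
  assumes "0 < \<alpha>"
    and "is_character S2inf (\<lambda>s. complex_of_real (measure mu (Fix s) powr \<alpha>))"
  shows "\<alpha> \<in> \<nat>"
proof (rule ccontr)
  assume "\<alpha> \<notin> \<nat>"
  then have not_int: "\<alpha> \<notin> \<int>"
    using assms(1) unfolding Nats_altdef2 by simp
  define m where "m = nat \<lfloor>\<alpha>\<rfloor> + 2"
  define c :: real where "c = 2 / 2 ^ (2 * m)"
  define D where "D = alt_diff (\<lambda>t. (1 - c * t) powr \<alpha>) m 0"
  have "real (2 * m) < 2 ^ (2 * m)"
    using less_exp[of "2 * m"] by (metis of_nat_less_iff of_nat_numeral of_nat_power)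
  then have "1 - c * (0 + real m) > 0"
    by (simp add: c_def field_simps)
  then have "D * (\<alpha> gchoose m) > 0"
    unfolding D_def by (rule alt_diff_powr_gchoose_pos[rotated, OF not_int]) (simp add: c_def)
  moreover have "\<alpha> gchoose m < 0"
    unfolding m_def using gchoose_floor_add_two_neg[OF assms(1) not_int] .
  moreover have "0 \<le> D"
    unfolding D_def c_def using character_alt_diff_nonneg[OF assms(2)] .
  ultimately show False
    using mult_nonneg_nonpos[of D "\<alpha> gchoose m"] by linarith
qed

end
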